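(* Let $\alpha\in\mathbb{R}^+\setminus\mathbb{Q}$ and let $f\colon[0,1)\to\mathbb{R}$ be non-negative and Riemann integrable. Then for every $y\in[0,1)$ the autocorrelation of $\mu_y=\sum_{z\in\mathbb{Z}}f(T_\alpha^z(y))\,\delta_z$ exists and equals $\sum_{z\in\mathbb{Z}}\Big(\int_0^1 f(T_\alpha^{-z}x)\,f(x)\,dx\Big)\delta_z$; in particular it is independent of $y$.
   Context: $T_\alpha(x)=\{x+\alpha\}$ on $[0,1)$, with $\{t\}$ the fractional part. For a measure $\mu$ on $\mathbb{Z}$, $\widetilde{\mu}(A)=\overline{\mu(-A)}$, $\mu|_n$ is the restriction to $\{|x|\le n\}$, and the autocorrelation $\gamma_\mu$ is the vague limit (pointwise convergence of masses at each $z\in\mathbb{Z}$) of $\frac1{2n+1}\mu|_n*\widetilde{\mu|_n}$. *)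

theory Defs
  imports "HOL-Analysis.Analysis"
begin

text \<open>Rotation T_alpha(x) = frac(x + alpha) on [0,1), and its integer powers.
  For z :: int, T_alpha^z x = frac(x + z*alpha) (for negative z this is the
  inverse map iterated).\<close>
definition T_rot :: "real \<Rightarrow> real \<Rightarrow> real" where
  "T_rot \<alpha> x = frac (x + \<alpha>)"

definition T_pow :: "real \<Rightarrow> int \<Rightarrow> real \<Rightarrow> real" where
  "T_pow \<alpha> z x = frac (x + of_int z * \<alpha>)"

text \<open>Measures on Z are represented by their point masses (int => complex).\<close>
type_synonym zmeasure = "int \<Rightarrow> complex"

definition restr :: "nat \<Rightarrow> zmeasure \<Rightarrow> zmeasure" where
  "restr n \<mu> = (\<lambda>z. if \<bar>z\<bar> \<le> int n then \<mu> z else 0)"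

definition reflect :: "zmeasure \<Rightarrow> zmeasure" where
  "reflect \<mu> = (\<lambda>z. cnj (\<mu> (- z)))"

text \<open>Convolution; used only for finitely supported measures.\<close>
definition zconv :: "zmeasure \<Rightarrow> zmeasure \<Rightarrow> zmeasure" where
  "zconv \<mu> \<nu> = (\<lambda>z. \<Sum>x\<in>{x. \<mu> x \<noteq> 0}. \<mu> x * \<nu> (z - x))"

text \<open>gamma is the autocorrelation of mu: vague limit, i.e. pointwise
  convergence of masses of (2n+1)^(-1) mu|_n * reflect(mu|_n).\<close>
definition is_autocorrelation :: "zmeasure \<Rightarrow> zmeasure \<Rightarrow> bool" where
  "is_autocorrelation \<mu> \<gamma> \<longleftrightarrow>
     (\<forall>z. (\<lambda>n::nat. zconv (restr n \<mu>) (reflect (restr n \<mu>)) z / of_nat (2 * n + 1))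
            \<longlonglongrightarrow> \<gamma> z)"

text \<open>Riemann integrability on [0,1) (Darboux criterion with a partition
  0 = p_0 < ... < p_n = 1 into half-open cells).\<close>
definition riemann_integrable_01 :: "(real \<Rightarrow> real) \<Rightarrow> bool" where
  "riemann_integrable_01 f \<longleftrightarrow> bounded (f ` {0..<1}) \<and>
     (\<forall>\<epsilon>>0. \<exists>(n::nat) (p::nat \<Rightarrow> real). p 0 = 0 \<and> p n = 1 \<and> (\<forall>i<n. p i < p (Suc i)) \<and>
        (\<Sum>i<n. (p (Suc i) - p i) *
            ((SUP x\<in>{p i..<p (Suc i)}. f x) - (INF x\<in>{p i..<p (Suc i)}. f x))) < \<epsilon>)"

end

theory Submission
  imports Defs "HOL-Analysis.Kronecker_Approximation_Theorem" "HOL-Real_Asymp.Real_Asymp"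
begin

text \<open>
  The irrational rotation is uniquely ergodic: along every orbit, the Birkhoff averages of a Riemann
  integrable function converge to its integral. For an interval \<open>[0, b)\<close> this comes from Kronecker's
  theorem: pick \<open>q\<close> with \<open>\<delta> = frac (q \<alpha>)\<close> small; the cells \<open>[i \<delta>, (i + 1) \<delta>)\<close> are translates of
  \<open>[0, \<delta>)\<close> by multiples of \<open>q \<alpha>\<close>, and moving the starting point by \<open>j \<alpha>\<close> changes an orbit count by at
  most \<open>j\<close>, so all cells are visited about equally often. Linearity extends this to step functions,
  and a sandwich argument to \<open>g = (f \<circ> T\<^sup>-\<^sup>z) * f\<close>, which lies between products of step functions.

  The mass at \<open>z\<close> of the \<open>n\<close>-th approximant of the autocorrelation is the average of \<open>g\<close> over the orbit
  segment \<open>T\<^sup>-\<^sup>n y, \<dots>, T\<^sup>n y\<close> up to at most \<open>2 |z|\<close> boundary terms; the two halves of that segment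
  are orbits of the rotations by \<open>\<alpha>\<close> and by \<open>-\<alpha>\<close>.
\<close>

section \<open>Orbit means of the rotation\<close>

definition orbit_sum :: "real \<Rightarrow> (real \<Rightarrow> real) \<Rightarrow> real \<Rightarrow> nat \<Rightarrow> real" where
  "orbit_sum \<alpha> h y N = (\<Sum>k<N. h (frac (y + real k * \<alpha>)))"

definition has_orbit_mean :: "real \<Rightarrow> (real \<Rightarrow> real) \<Rightarrow> real \<Rightarrow> bool" where
  "has_orbit_mean \<alpha> h L \<longleftrightarrow> (\<forall>y. (\<lambda>N. orbit_sum \<alpha> h y N / real N) \<longlonglongrightarrow> L)"

lemma orbit_sum_mono:
  "(\<And>t. t \<in> {0..<1} \<Longrightarrow> h t \<le> g t) \<Longrightarrow> orbit_sum \<alpha> h y N \<le> orbit_sum \<alpha> g y N"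
  unfolding orbit_sum_def by (intro sum_mono) (simp add: frac_lt_1)

lemma has_orbit_mean_add:
  "has_orbit_mean \<alpha> f L \<Longrightarrow> has_orbit_mean \<alpha> g M \<Longrightarrow> has_orbit_mean \<alpha> (\<lambda>t. f t + g t) (L + M)"
  unfolding has_orbit_mean_def orbit_sum_def by (simp add: sum.distrib add_divide_distrib tendsto_add)

lemma has_orbit_mean_cmult:
  assumes "has_orbit_mean \<alpha> f L"
  shows "has_orbit_mean \<alpha> (\<lambda>t. c * f t) (c * L)"
proof -
  have "(\<lambda>N. c * (orbit_sum \<alpha> f y N / real N)) \<longlonglongrightarrow> c * L" for y
    using assms unfolding has_orbit_mean_def by (intro tendsto_mult_left) auto
  then show ?thesis
    unfolding has_orbit_mean_def orbit_sum_def by (simp add: sum_distrib_left)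
qed

lemma has_orbit_mean_diff:
  "has_orbit_mean \<alpha> f L \<Longrightarrow> has_orbit_mean \<alpha> g M \<Longrightarrow> has_orbit_mean \<alpha> (\<lambda>t. f t - g t) (L - M)"
  unfolding has_orbit_mean_def orbit_sum_def by (simp add: sum_subtractf diff_divide_distrib tendsto_diff)

lemma has_orbit_mean_cong:
  "has_orbit_mean \<alpha> f L \<Longrightarrow> (\<And>t. t \<in> {0..<1} \<Longrightarrow> f t = g t) \<Longrightarrow> has_orbit_mean \<alpha> g L"
  unfolding has_orbit_mean_def orbit_sum_def by (simp add: frac_lt_1)

lemma has_orbit_mean_rotate:
  "has_orbit_mean \<alpha> f L \<Longrightarrow> has_orbit_mean \<alpha> (\<lambda>t. f (frac (t + \<beta>))) L"
proof -
  assume mean: "has_orbit_mean \<alpha> f L"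
  have "orbit_sum \<alpha> (\<lambda>t. f (frac (t + \<beta>))) y N = orbit_sum \<alpha> f (y + \<beta>) N" for y N
    unfolding orbit_sum_def by (simp add: algebra_simps)
  then show ?thesis
    using mean unfolding has_orbit_mean_def by simp
qed

lemma has_orbit_mean_mono:
  assumes "has_orbit_mean \<alpha> f L" "has_orbit_mean \<alpha> g M" "\<And>t. t \<in> {0..<1} \<Longrightarrow> f t \<le> g t"
  shows "L \<le> M"
proof (rule LIMSEQ_le)
  show "(\<lambda>N. orbit_sum \<alpha> f 0 N / real N) \<longlonglongrightarrow> L" "(\<lambda>N. orbit_sum \<alpha> g 0 N / real N) \<longlonglongrightarrow> M"
    using assms(1,2) unfolding has_orbit_mean_def by blast+
  show "\<exists>N0. \<forall>N\<ge>N0. orbit_sum \<alpha> f 0 N / real N \<le> orbit_sum \<alpha> g 0 N / real N"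
    using assms(3) by (auto intro!: divide_right_mono orbit_sum_mono)
qed

lemma orbit_sum_step:
  "orbit_sum \<alpha> h (y + \<alpha>) N = orbit_sum \<alpha> h y N + h (frac (y + real N * \<alpha>)) - h (frac y)"
proof -
  have "orbit_sum \<alpha> h y (Suc N) = orbit_sum \<alpha> h (y + \<alpha>) N + h (frac y)"
    unfolding orbit_sum_def sum.lessThan_Suc_shift by (simp add: algebra_simps)
  then show ?thesis by (simp add: orbit_sum_def)
qed

lemma orbit_sum_shift:
  assumes "\<forall>t\<in>{0..<1}. 0 \<le> h t \<and> h t \<le> 1"
  shows "\<bar>orbit_sum \<alpha> h (y + real j * \<alpha>) N - orbit_sum \<alpha> h y N\<bar> \<le> real j"
proof (induction j)
  case 0
  then show ?case by simp
next
  case (Suc j)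
  have bounded: "0 \<le> h (frac t) \<and> h (frac t) \<le> 1" for t
    using assms by (simp add: frac_lt_1)
  have step: "\<bar>orbit_sum \<alpha> h (y + real j * \<alpha> + \<alpha>) N - orbit_sum \<alpha> h (y + real j * \<alpha>) N\<bar> \<le> 1"
    unfolding orbit_sum_step
    using bounded[of "y + real j * \<alpha> + real N * \<alpha>"] bounded[of "y + real j * \<alpha>"] by linarith
  from step Suc.IH have "\<bar>orbit_sum \<alpha> h (y + real j * \<alpha> + \<alpha>) N - orbit_sum \<alpha> h y N\<bar> \<le> real j + 1"
    by linarith
  then show ?case
    by (simp add: algebra_simps)
qed

lemma orbit_sum_indicator_Ico_01: "orbit_sum \<alpha> (indicator {0..<1}) y N = real N"
  by (simp add: orbit_sum_def frac_lt_1)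

section \<open>Equidistribution of intervals\<close>

lemma indicator_Ico_frac_shift_le:
  assumes "0 \<le> c"
  shows "indicator {c..<c + d} (frac x) \<le> (indicator {0..<d} (frac (x - c)) :: real)"
proof (cases "frac x \<in> {c..<c + d}")
  case True
  then have "frac x - c \<in> {0..<1}"
    using assms frac_lt_1[of x] by auto
  then have "frac (x - c) = frac x - c"
    using frac_add_simps(1)[of x "- c"] by simp
  then show ?thesis
    using True by simp
qed simp

lemma indicator_Ico_frac_shift_eq:
  assumes "0 \<le> c" "c + d \<le> 1"
  shows "indicator {c..<c + d} (frac x) = (indicator {0..<d} (frac (x - c)) :: real)"
proof (cases "frac (x - c) \<in> {0..<d}")
  case True
  then have "frac (x - c) + c \<in> {0..<1}"
    using assms by auto
  then have "frac (frac (x - c) + c) = frac (x - c) + c"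
    by (rule frac_eq_id)
  then have "frac x = frac (x - c) + c"
    by simp
  then show ?thesis
    using True by simp
next
  case False
  then show ?thesis
    using indicator_Ico_frac_shift_le[OF assms(1), of d x] by (auto simp: indicator_def)
qed

lemma frac_diff_mult_frac: "frac (x - real i * frac (real q * \<alpha>)) = frac (x - real (i * q) * \<alpha>)"
proof -
  have "x - real i * frac (real q * \<alpha>) = x - real (i * q) * \<alpha> + of_int (int i * \<lfloor>real q * \<alpha>\<rfloor>)"
    by (simp add: frac_def algebra_simps)
  also have "frac \<dots> = frac (x - real (i * q) * \<alpha>)"
    by (rule frac_add_of_int_right)
  finally show ?thesis .
qed

lemma indicator_Ico_telescope:
  fixes p :: "nat \<Rightarrow> real"
  assumes "\<forall>i<n. p i \<le> p (Suc i)"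
  shows "indicator {p 0..<p n} t = (\<Sum>i<n. indicator {p i..<p (Suc i)} t :: real)"
  using assms
proof (induction n)
  case 0
  then show ?case by simp
next
  case (Suc n)
  have "p 0 \<le> p n"
    by (rule lift_Suc_mono_le_ivl[of "{..<n}"]) (use Suc.prems in auto)
  moreover have "p n \<le> p (Suc n)"
    using Suc.prems by simp
  ultimately have "indicator {p 0..<p (Suc n)} t
      = indicator {p 0..<p n} t + (indicator {p n..<p (Suc n)} t :: real)"
    by (auto simp: indicator_def)
  then show ?case
    using Suc by simp
qed

lemma indicator_Ico_mono:
  fixes a b b' t :: real
  shows "b \<le> b' \<Longrightarrow> indicator {a..<b} t \<le> (indicator {a..<b'} t :: real)"
  by (auto simp: indicator_def)

text \<open>The cell \<open>[i \<delta>, (i + 1) \<delta>)\<close> is \<open>[0, \<delta>)\<close> translated by \<open>i q \<alpha>\<close> modulo 1.\<close>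

lemma orbit_sum_indicator_cell:
  fixes q i N :: nat
  assumes "0 < \<delta>" and \<delta>_eq: "\<delta> = frac (real q * \<alpha>)"
  shows "orbit_sum \<alpha> (indicator {real i * \<delta>..<real i * \<delta> + \<delta>}) y N
      \<le> orbit_sum \<alpha> (indicator {0..<\<delta>}) (y - real (i * q) * \<alpha>) N"
    and "real i * \<delta> + \<delta> \<le> 1 \<Longrightarrow> orbit_sum \<alpha> (indicator {real i * \<delta>..<real i * \<delta> + \<delta>}) y N
      = orbit_sum \<alpha> (indicator {0..<\<delta>}) (y - real (i * q) * \<alpha>) N"
proof -
  have frac_cell: "frac (y + real k * \<alpha> - real i * \<delta>) = frac (y - real (i * q) * \<alpha> + real k * \<alpha>)" for k
    using frac_diff_mult_frac[of "y + real k * \<alpha>" i q \<alpha>] unfolding \<delta>_eq by (simp add: algebra_simps)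
  have "0 \<le> real i * \<delta>"
    using \<open>0 < \<delta>\<close> by simp
  note le = indicator_Ico_frac_shift_le[OF this] and eq = indicator_Ico_frac_shift_eq[OF this]
  show "orbit_sum \<alpha> (indicator {real i * \<delta>..<real i * \<delta> + \<delta>}) y N
      \<le> orbit_sum \<alpha> (indicator {0..<\<delta>}) (y - real (i * q) * \<alpha>) N"
    unfolding orbit_sum_def using le[of \<delta> "y + real _ * \<alpha>"] unfolding frac_cell by (rule sum_mono)
  show "orbit_sum \<alpha> (indicator {real i * \<delta>..<real i * \<delta> + \<delta>}) y N
      = orbit_sum \<alpha> (indicator {0..<\<delta>}) (y - real (i * q) * \<alpha>) N" if "real i * \<delta> + \<delta> \<le> 1"
    unfolding orbit_sum_def using eq[OF that, of "y + real _ * \<alpha>"] unfolding frac_cell by (rule sum.cong[OF refl])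
qed

lemma orbit_sum_indicator_Ico_cells:
  fixes q m N :: nat and y :: real
  assumes \<delta>: "0 < \<delta>" "\<delta> = frac (real q * \<alpha>)"
  defines "F \<equiv> orbit_sum \<alpha> (indicator {0..<\<delta>}) y N"
  shows "orbit_sum \<alpha> (indicator {0..<real m * \<delta>}) y N \<le> real m * (F + real (m * q))"
    and "real m * \<delta> \<le> 1 \<Longrightarrow> real m * (F - real (m * q)) \<le> orbit_sum \<alpha> (indicator {0..<real m * \<delta>}) y N"
proof -
  define cell where "cell i = orbit_sum \<alpha> (indicator {real i * \<delta>..<real i * \<delta> + \<delta>}) y N" for i
  define shifted where "shifted i = orbit_sum \<alpha> (indicator {0..<\<delta>}) (y - real (i * q) * \<alpha>) N" for i
  have "indicator {0..<real m * \<delta>} t = (\<Sum>i<m. indicator {real i * \<delta>..<real i * \<delta> + \<delta>} t :: real)" for t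
    using indicator_Ico_telescope[of m "\<lambda>i. real i * \<delta>" t] \<open>0 < \<delta>\<close> by (simp add: algebra_simps)
  then have split: "orbit_sum \<alpha> (indicator {0..<real m * \<delta>}) y N = (\<Sum>i<m. cell i)"
    unfolding orbit_sum_def cell_def by (simp only:) (rule sum.swap)
  have shift: "\<bar>shifted i - F\<bar> \<le> real (i * q)" and shift_mono: "i < m \<Longrightarrow> real (i * q) \<le> real (m * q)" for i
    using orbit_sum_shift[of "indicator {0..<\<delta>}" \<alpha> "y - real (i * q) * \<alpha>" "i * q" N]
    unfolding shifted_def F_def by (simp_all add: indicator_def mult_right_mono)
  have "(\<Sum>i<m. cell i) \<le> (\<Sum>i<m. F + real (m * q))"
    using orbit_sum_indicator_cell(1)[OF \<delta>] shift shift_mono unfolding cell_def shifted_def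
    by (intro sum_mono) (smt (verit) lessThan_iff)
  then show "orbit_sum \<alpha> (indicator {0..<real m * \<delta>}) y N \<le> real m * (F + real (m * q))"
    using split by simp
  assume "real m * \<delta> \<le> 1"
  have "real i * \<delta> + \<delta> \<le> 1" if "i < m" for i
  proof -
    have "real (Suc i) * \<delta> \<le> real m * \<delta>"
      using that \<open>0 < \<delta>\<close> by (intro mult_right_mono) auto
    then show ?thesis
      using \<open>real m * \<delta> \<le> 1\<close> by (simp add: algebra_simps)
  qed
  then have "(\<Sum>i<m. F - real (m * q)) \<le> (\<Sum>i<m. cell i)"
    using orbit_sum_indicator_cell(2)[OF \<delta>] shift shift_mono unfolding cell_def shifted_def
    by (intro sum_mono) (smt (verit) lessThan_iff)
  then show "real m * (F - real (m * q)) \<le> orbit_sum \<alpha> (indicator {0..<real m * \<delta>}) y N"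
    using split by simp
qed

lemma orbit_sum_indicator_Ico_0_cell_bounds:
  fixes q m N :: nat and y :: real
  assumes \<delta>: "0 < \<delta>" "\<delta> = frac (real q * \<alpha>)"
    and m: "real m * \<delta> \<le> b" "b < (real m + 1) * \<delta>" "b \<le> 1"
  defines "F \<equiv> orbit_sum \<alpha> (indicator {0..<\<delta>}) y N"
  shows "real m * (F - real m * real q) \<le> orbit_sum \<alpha> (indicator {0..<b}) y N"
    and "orbit_sum \<alpha> (indicator {0..<b}) y N \<le> (real m + 1) * (F + (real m + 1) * real q)"
proof -
  have "real m * (F - real m * real q) \<le> orbit_sum \<alpha> (indicator {0..<real m * \<delta>}) y N"
    using orbit_sum_indicator_Ico_cells(2)[OF \<delta>, of m] m unfolding F_def by simp
  also have "\<dots> \<le> orbit_sum \<alpha> (indicator {0..<b}) y N"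
    using m(1) by (intro orbit_sum_mono indicator_Ico_mono)
  finally show "real m * (F - real m * real q) \<le> orbit_sum \<alpha> (indicator {0..<b}) y N" .
  have "orbit_sum \<alpha> (indicator {0..<b}) y N \<le> orbit_sum \<alpha> (indicator {0..<real (Suc m) * \<delta>}) y N"
    using m(2) by (intro orbit_sum_mono indicator_Ico_mono) (simp add: algebra_simps)
  also have "\<dots> \<le> (real m + 1) * (F + (real m + 1) * real q)"
    using orbit_sum_indicator_Ico_cells(1)[OF \<delta>, of "Suc m"] unfolding F_def by (simp add: algebra_simps)
  finally show "orbit_sum \<alpha> (indicator {0..<b}) y N \<le> (real m + 1) * (F + (real m + 1) * real q)" .
qed

lemma orbit_sum_indicator_Ico_0_bounds:
  fixes q m K N :: nat
  assumes \<delta>: "0 < \<delta>" "\<delta> = frac (real q * \<alpha>)" and "0 < N"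
    and K: "real K * \<delta> \<le> 1" "1 < (real K + 1) * \<delta>"
    and m: "real m * \<delta> \<le> b" "b < (real m + 1) * \<delta>" "b \<le> 1"
  shows "orbit_sum \<alpha> (indicator {0..<b}) y N / real N
           \<le> (real m + 1) / real K + (real m + 1) * (real K + real m + 1) * real q / real N"
    and "real m / (real K + 1) - real m * (real K + real m + 1) * real q / real N
           \<le> orbit_sum \<alpha> (indicator {0..<b}) y N / real N"
proof -
  define F where "F = orbit_sum \<alpha> (indicator {0..<\<delta>}) y N"
  note cell_bounds = orbit_sum_indicator_Ico_0_cell_bounds[OF \<delta>, where y = y and N = N, folded F_def]
  note one_bounds = cell_bounds[OF K order_refl, unfolded orbit_sum_indicator_Ico_01]
  have "\<delta> < 1"
    using \<delta>(2) by (simp add: frac_lt_1)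
  then have "0 < K"
    using K(2) by (cases K) auto
  then have F_le: "F \<le> real N / real K + real K * real q"
    using one_bounds(1) by (simp add: field_simps)
  have F_ge: "real N / (real K + 1) - (real K + 1) * real q \<le> F"
    using one_bounds(2) by (simp add: field_simps)
  have "(real m + 1) * (F + (real m + 1) * real q) \<le> (real m + 1) * (real N / real K + (real K + real m + 1) * real q)"
    using F_le by (intro mult_left_mono) (auto simp: algebra_simps)
  then have "orbit_sum \<alpha> (indicator {0..<b}) y N \<le> (real m + 1) * (real N / real K + (real K + real m + 1) * real q)"
    using cell_bounds(2)[OF m] by linarith
  then have "orbit_sum \<alpha> (indicator {0..<b}) y N / real N
      \<le> (real m + 1) * (real N / real K + (real K + real m + 1) * real q) / real N"
    by (intro divide_right_mono) auto
  also have "\<dots> = (real m + 1) / real K + (real m + 1) * (real K + real m + 1) * real q / real N"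
    using \<open>0 < N\<close> by (simp add: field_simps)
  finally show "orbit_sum \<alpha> (indicator {0..<b}) y N / real N
      \<le> (real m + 1) / real K + (real m + 1) * (real K + real m + 1) * real q / real N" .
  have "real m * (real N / (real K + 1) - (real K + real m + 1) * real q) \<le> real m * (F - real m * real q)"
    using F_ge by (intro mult_left_mono) (auto simp: algebra_simps)
  then have "real m * (real N / (real K + 1) - (real K + real m + 1) * real q) \<le> orbit_sum \<alpha> (indicator {0..<b}) y N"
    using cell_bounds(1)[OF m] by linarith
  then have "real m * (real N / (real K + 1) - (real K + real m + 1) * real q) / real N
      \<le> orbit_sum \<alpha> (indicator {0..<b}) y N / real N"
    by (intro divide_right_mono) auto
  moreover have "real m * (real N / (real K + 1) - (real K + real m + 1) * real q) / real N
      = real m / (real K + 1) - real m * (real K + real m + 1) * real q / real N"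
    using \<open>0 < N\<close> by (simp add: field_simps)
  ultimately show "real m / (real K + 1) - real m * (real K + real m + 1) * real q / real N
      \<le> orbit_sum \<alpha> (indicator {0..<b}) y N / real N"
    by simp
qed

lemma frac_mult_small:
  assumes "\<alpha> \<notin> \<rat>" "0 < \<eta>" "\<eta> \<le> 1"
  obtains q :: nat where "0 < frac (real q * \<alpha>)" "frac (real q * \<alpha>) < \<eta>"
proof -
  obtain q :: nat where "\<bar>frac (real q * \<alpha>) - \<eta> / 2\<bar> < \<eta> / 2"
    using Kronecker_approx_1_explicit[OF assms(1), of "\<eta> / 2" "\<eta> / 2"] assms(2,3) by auto
  then have "0 < frac (real q * \<alpha>)" "frac (real q * \<alpha>) < \<eta>"
    by linarith+
  then show thesis
    by (rule that)
qed

lemma nat_multiple_bracket: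
  fixes \<delta> b :: real
  assumes "0 < \<delta>" "0 \<le> b"
  obtains m :: nat where "real m * \<delta> \<le> b" "b < (real m + 1) * \<delta>"
proof -
  have "real (nat \<lfloor>b / \<delta>\<rfloor>) = of_int \<lfloor>b / \<delta>\<rfloor>"
    using assms by simp
  then have "real (nat \<lfloor>b / \<delta>\<rfloor>) \<le> b / \<delta>" "b / \<delta> < real (nat \<lfloor>b / \<delta>\<rfloor>) + 1"
    by linarith+
  then show thesis
    using assms(1) by (intro that[of "nat \<lfloor>b / \<delta>\<rfloor>"]) (simp_all add: field_simps)
qed

lemma cell_count_ratio_bounds:
  fixes K m :: nat
  assumes "0 < \<delta>" "\<delta> < 1/2" "0 \<le> b" "b \<le> 1"
    and K: "real K * \<delta> \<le> 1" "1 < (real K + 1) * \<delta>"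
    and m: "real m * \<delta> \<le> b" "b < (real m + 1) * \<delta>"
  shows "(real m + 1) / real K \<le> b + 4 * \<delta>" and "b - 2 * \<delta> \<le> real m / (real K + 1)"
proof -
  have "0 < K"
    using K(2) \<open>\<delta> < 1/2\<close> by (cases K) auto
  have "(b + 4 * \<delta>) * (1 - \<delta>) \<le> (b + 4 * \<delta>) * (real K * \<delta>)"
    using K(2) assms(1,3) by (intro mult_left_mono) (auto simp: algebra_simps)
  moreover have "(b + 4 * \<delta>) * (1 - \<delta>) = b + \<delta> + \<delta> * (3 - b - 4 * \<delta>)"
    by (simp add: algebra_simps)
  moreover have "0 \<le> \<delta> * (3 - b - 4 * \<delta>)"
    using assms(1,2,4) by (intro mult_nonneg_nonneg) auto
  ultimately have "(real m + 1) * \<delta> \<le> ((b + 4 * \<delta>) * real K) * \<delta>"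
    using m(1) by (simp add: algebra_simps)
  then have "real m + 1 \<le> (b + 4 * \<delta>) * real K"
    using \<open>0 < \<delta>\<close> by simp
  then show "(real m + 1) / real K \<le> b + 4 * \<delta>"
    using \<open>0 < K\<close> by (simp add: field_simps)
  have "(b - 2 * \<delta>) * (real K + 1) \<le> real m"
  proof (cases "b - 2 * \<delta> \<le> 0")
    case True
    then have "(b - 2 * \<delta>) * (real K + 1) \<le> 0"
      by (intro mult_nonpos_nonneg) auto
    then show ?thesis
      using of_nat_0_le_iff[of m] by linarith
  next
    case False
    have "(b - 2 * \<delta>) * ((real K + 1) * \<delta>) \<le> (b - 2 * \<delta>) * (1 + \<delta>)"
      using False K(1) by (intro mult_left_mono) (auto simp: algebra_simps)
    moreover have "(b - 2 * \<delta>) * (1 + \<delta>) = b - \<delta> - \<delta> * (1 - b + 2 * \<delta>)"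
      by (simp add: algebra_simps)
    moreover have "0 \<le> \<delta> * (1 - b + 2 * \<delta>)"
      using assms(1,4) by (intro mult_nonneg_nonneg) auto
    ultimately have "((b - 2 * \<delta>) * (real K + 1)) * \<delta> \<le> real m * \<delta>"
      using m(2) by (simp add: algebra_simps)
    then show ?thesis
      using \<open>0 < \<delta>\<close> by simp
  qed
  then show "b - 2 * \<delta> \<le> real m / (real K + 1)"
    by (simp add: field_simps)
qed

lemma orbit_mean_indicator_Ico_0:
  assumes irr: "\<alpha> \<notin> \<rat>" and b: "0 \<le> b" "b \<le> 1"
  shows "(\<lambda>N. orbit_sum \<alpha> (indicator {0..<b}) y N / real N) \<longlonglongrightarrow> b"
  unfolding tendsto_iff dist_real_def
proof (intro allI impI)
  fix \<epsilon> :: real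
  assume "0 < \<epsilon>"
  then have "0 < min (1/2) (\<epsilon>/4)" "min (1/2) (\<epsilon>/4) \<le> (1::real)"
    by auto
  then obtain q :: nat where q: "0 < frac (real q * \<alpha>)" "frac (real q * \<alpha>) < min (1/2) (\<epsilon>/4)"
    by (rule frac_mult_small[OF irr])
  define \<delta> where "\<delta> = frac (real q * \<alpha>)"
  have \<delta>: "0 < \<delta>" "\<delta> < 1/2" "4 * \<delta> < \<epsilon>"
    using q unfolding \<delta>_def by auto
  obtain K :: nat where K: "real K * \<delta> \<le> 1" "1 < (real K + 1) * \<delta>"
    using nat_multiple_bracket[OF \<delta>(1), of 1] by auto
  obtain m :: nat where m: "real m * \<delta> \<le> b" "b < (real m + 1) * \<delta>"
    using nat_multiple_bracket[OF \<delta>(1) b(1)] by auto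
  note ratio = cell_count_ratio_bounds[OF \<delta>(1,2) b K m]
  define c where "c = (real m + 1) * (real K + real m + 1) * real q"
  define c' where "c' = real m * (real K + real m + 1) * real q"
  have "\<forall>\<^sub>F N in sequentially. c / real N < b + \<epsilon> - (real m + 1) / real K"
    using ratio(1) \<delta>(3) by (intro order_tendstoD(2)[OF lim_const_over_n]) simp
  moreover have "\<forall>\<^sub>F N in sequentially. c' / real N < real m / (real K + 1) - (b - \<epsilon>)"
    using ratio(2) \<delta>(1,3) by (intro order_tendstoD(2)[OF lim_const_over_n]) simp
  moreover have "\<forall>\<^sub>F N in sequentially. 0 < N"
    by (rule eventually_gt_at_top)
  ultimately show "\<forall>\<^sub>F N in sequentially. \<bar>orbit_sum \<alpha> (indicator {0..<b}) y N / real N - b\<bar> < \<epsilon>"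
  proof eventually_elim
    case (elim N)
    show ?case
      using orbit_sum_indicator_Ico_0_bounds[OF \<delta>(1) \<delta>_def elim(3) K m b(2), of y] elim(1,2)
      unfolding c_def c'_def abs_less_iff by linarith
  qed
qed

lemma has_orbit_mean_indicator_Ico:
  assumes "\<alpha> \<notin> \<rat>" "0 \<le> a" "a \<le> b" "b \<le> 1"
  shows "has_orbit_mean \<alpha> (indicator {a..<b}) (b - a)"
proof -
  have "indicator {a..<b} (frac x) = indicator {0..<b} (frac x) - (indicator {0..<a} (frac x) :: real)" for x
    using assms(2,3) frac_ge_0[of x] by (auto simp: indicator_def)
  then have split: "orbit_sum \<alpha> (indicator {a..<b}) y N
      = orbit_sum \<alpha> (indicator {0..<b}) y N - orbit_sum \<alpha> (indicator {0..<a}) y N" for y N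
    by (simp add: orbit_sum_def sum_subtractf)
  show ?thesis
    unfolding has_orbit_mean_def split diff_divide_distrib
    using assms by (intro allI tendsto_diff orbit_mean_indicator_Ico_0) auto
qed

section \<open>Step functions\<close>

lemma has_integral_indicator_Ico:
  fixes a b :: real
  assumes "0 \<le> a" "a \<le> b" "b \<le> 1"
  shows "(indicator {a..<b} has_integral (b - a)) {0..<1}"
proof -
  have "((\<lambda>x. 1::real) has_integral (b - a)) {a..b}"
    using has_integral_const_real[of "1::real" a b] assms(2) by simp
  moreover have "negligible {x \<in> {a..b} - {a..<b}. (1::real) \<noteq> 0}"
    by (rule negligible_subset[of "{b}"]) auto
  moreover have "negligible {x \<in> {a..<b} - {a..b}. (1::real) \<noteq> 0}"
    by (rule negligible_subset[of "{}"]) auto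
  ultimately have "((\<lambda>x. 1::real) has_integral (b - a)) {a..<b}"
    using has_integral_spike_set_eq[of "{a..b}" "{a..<b}" "\<lambda>x. 1::real" "b - a"] by blast
  moreover have "indicator {a..<b} = (\<lambda>x. if x \<in> {a..<b} then 1 else 0 :: real)"
    by (auto simp: indicator_def)
  ultimately show ?thesis
    using assms has_integral_restrict[of "{a..<b}" "{0..<1}" "\<lambda>x. 1::real"] by auto
qed

inductive step_fun :: "(real \<Rightarrow> real) \<Rightarrow> bool" where
  step_fun_indicator: "0 \<le> a \<Longrightarrow> b \<le> 1 \<Longrightarrow> step_fun (indicator {a..<b})"
| step_fun_add: "step_fun f \<Longrightarrow> step_fun g \<Longrightarrow> step_fun (\<lambda>t. f t + g t)"
| step_fun_cmult: "step_fun f \<Longrightarrow> step_fun (\<lambda>t. c * f t)"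
| step_fun_cong: "step_fun f \<Longrightarrow> (\<And>t. t \<in> {0..<1} \<Longrightarrow> f t = g t) \<Longrightarrow> step_fun g"

lemma step_fun_sum:
  assumes "finite I" "\<And>i. i \<in> I \<Longrightarrow> step_fun (f i)"
  shows "step_fun (\<lambda>t. \<Sum>i\<in>I. f i t)"
  using assms
proof (induction I rule: finite_induct)
  case empty
  have "step_fun (\<lambda>t. 0 * indicator {0..<0} t)"
    by (intro step_fun_cmult step_fun_indicator) auto
  then show ?case
    by simp
next
  case (insert i I)
  then show ?case
    by (simp add: step_fun_add)
qed

lemma step_fun_mult_indicator:
  assumes "step_fun g" "0 \<le> a" "b \<le> 1"
  shows "step_fun (\<lambda>t. indicator {a..<b} t * g t)"
  using assms
proof (induction g rule: step_fun.induct)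
  case (step_fun_indicator c d)
  then show ?case
    by (simp add: indicator_inter_arith[symmetric] step_fun.step_fun_indicator)
next
  case (step_fun_add f g)
  then show ?case
    by (simp add: distrib_left step_fun.step_fun_add)
next
  case (step_fun_cmult f c)
  then have "step_fun (\<lambda>t. c * (indicator {a..<b} t * f t))"
    by (intro step_fun.step_fun_cmult)
  then show ?case
    by (simp add: algebra_simps)
next
  case (step_fun_cong f g)
  then show ?case
    by (auto intro: step_fun.step_fun_cong)
qed

lemma step_fun_mult:
  assumes "step_fun f" "step_fun g"
  shows "step_fun (\<lambda>t. f t * g t)"
  using assms
proof (induction f rule: step_fun.induct)
  case (step_fun_indicator a b)
  then show ?case
    by (intro step_fun_mult_indicator) auto
next
  case (step_fun_add f1 f2)
  then show ?case
    by (simp add: distrib_right step_fun.step_fun_add)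
next
  case (step_fun_cmult f c)
  then have "step_fun (\<lambda>t. c * (f t * g t))"
    by (intro step_fun.step_fun_cmult)
  then show ?case
    by (simp add: algebra_simps)
next
  case (step_fun_cong f1 f2)
  then show ?case
    by (auto intro: step_fun.step_fun_cong)
qed

lemma indicator_Ico_frac_rotate:
  fixes a b t \<beta> :: real
  assumes "0 \<le> a" "b \<le> 1" "t \<in> {0..<1}"
  defines "s \<equiv> frac \<beta>"
  shows "indicator {a..<b} (frac (t + \<beta>))
    = indicator {max 0 (a - s)..<b - s} t + (indicator {a + 1 - s..<min 1 (b + 1 - s)} t :: real)"
proof -
  have s: "0 \<le> s" "s < 1"
    unfolding s_def by (simp_all add: frac_lt_1)
  show ?thesis
  proof (cases "t + s < 1")
    case True
    then have "frac (t + \<beta>) = t + s"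
      using assms unfolding s_def by (simp add: frac_add)
    moreover have "t \<in> {max 0 (a - s)..<b - s} \<longleftrightarrow> t + s \<in> {a..<b}"
      using assms by auto
    moreover have "t \<notin> {a + 1 - s..<min 1 (b + 1 - s)}"
      using True assms by auto
    ultimately show ?thesis
      by (simp add: indicator_def)
  next
    case False
    then have "frac (t + \<beta>) = t + s - 1"
      using assms unfolding s_def by (simp add: frac_add)
    moreover have "t \<notin> {max 0 (a - s)..<b - s}"
      using False assms by auto
    moreover have "t \<in> {a + 1 - s..<min 1 (b + 1 - s)} \<longleftrightarrow> t + s - 1 \<in> {a..<b}"
      using assms s by auto
    ultimately show ?thesis
      by (simp add: indicator_def)
  qed
qed

lemma step_fun_rotate:
  assumes "step_fun f"
  shows "step_fun (\<lambda>t. f (frac (t + \<beta>)))"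
  using assms
proof (induction f rule: step_fun.induct)
  case (step_fun_indicator a b)
  define s where "s = frac \<beta>"
  have "0 \<le> s" "s < 1"
    unfolding s_def by (simp_all add: frac_lt_1)
  with step_fun_indicator have "step_fun (\<lambda>t. indicator {max 0 (a - s)..<b - s} t
      + indicator {a + 1 - s..<min 1 (b + 1 - s)} t)"
    by (intro step_fun.step_fun_add step_fun.step_fun_indicator) auto
  then show ?case
    by (rule step_fun_cong) (use step_fun_indicator in \<open>simp add: indicator_Ico_frac_rotate s_def\<close>)
next
  case (step_fun_add f g)
  then show ?case
    by (simp add: step_fun.step_fun_add)
next
  case (step_fun_cmult f c)
  then show ?case
    by (simp add: step_fun.step_fun_cmult)
next
  case (step_fun_cong f g)
  then show ?case
    by (auto intro: step_fun.step_fun_cong simp: frac_lt_1)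
qed

lemma step_fun_integral_orbit_mean:
  assumes "\<alpha> \<notin> \<rat>" "step_fun f"
  shows "\<exists>I. (f has_integral I) {0..<1} \<and> has_orbit_mean \<alpha> f I"
  using assms(2)
proof (induction f rule: step_fun.induct)
  case (step_fun_indicator a b)
  show ?case
  proof (cases "a \<le> b")
    case True
    then show ?thesis
      using step_fun_indicator has_integral_indicator_Ico has_orbit_mean_indicator_Ico[OF assms(1)]
      by blast
  next
    case False
    then have "indicator {a..<b} = (\<lambda>t. 0 * indicator {0..<0} t :: real)"
      by (auto simp: indicator_def)
    then show ?thesis
      using has_orbit_mean_cmult[OF has_orbit_mean_indicator_Ico[OF assms(1)], of 0 0 0] by auto
  qed
next
  case (step_fun_add f g)
  then show ?case
    using has_integral_add has_orbit_mean_add by blast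
next
  case (step_fun_cmult f c)
  then show ?case
    using has_integral_mult_right has_orbit_mean_cmult by blast
next
  case (step_fun_cong f g)
  then obtain I where "(f has_integral I) {0..<1}" "has_orbit_mean \<alpha> f I"
    by blast
  then show ?case
    using step_fun_cong(2) has_integral_eq[of "{0..<1}" f g I] has_orbit_mean_cong by metis
qed

lemma step_fun_diff: "step_fun f \<Longrightarrow> step_fun g \<Longrightarrow> step_fun (\<lambda>t. f t - g t)"
  using step_fun_add[of f "\<lambda>t. -1 * g t"] step_fun_cmult[of g "-1"] by simp

section \<open>Riemann integrable functions\<close>

lemma has_orbit_mean_sandwich:
  assumes approx: "\<And>\<epsilon>. 0 < \<epsilon> \<Longrightarrow> \<exists>s S I J. (s has_integral I) {0..<1} \<and> (S has_integral J) {0..<1}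
      \<and> has_orbit_mean \<alpha> s I \<and> has_orbit_mean \<alpha> S J \<and> J - I < \<epsilon> \<and> (\<forall>t\<in>{0..<1}. s t \<le> h t \<and> h t \<le> S t)"
  shows "has_orbit_mean \<alpha> h (integral {0..<1} h)"
proof -
  have "h integrable_on {0..<1}"
  proof (rule integrable_straddle)
    fix e :: real
    assume "0 < e"
    then obtain s S I J where *: "(s has_integral I) {0..<1}" "(S has_integral J) {0..<1}" "J - I < e"
      "\<forall>t\<in>{0..<1}. s t \<le> h t \<and> h t \<le> S t"
      using approx by blast
    moreover have "I \<le> J"
      using has_integral_le[OF *(1,2)] *(4) by force
    ultimately show "\<exists>g h' i j. (g has_integral i) {0..<1} \<and> (h' has_integral j) {0..<1} \<and> \<bar>i - j\<bar> < e
        \<and> (\<forall>x\<in>{0..<1}. g x \<le> h x \<and> h x \<le> h' x)"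
      by (intro exI[of _ s] exI[of _ S] exI[of _ I] exI[of _ J]) auto
  qed
  then have h_int: "(h has_integral integral {0..<1} h) {0..<1}"
    by (rule integrable_integral)
  show ?thesis
    unfolding has_orbit_mean_def
  proof (intro allI order_tendstoI)
    fix y a
    assume "a < integral {0..<1} h"
    then obtain s S I J where *: "(S has_integral J) {0..<1}" "has_orbit_mean \<alpha> s I"
      "J - I < integral {0..<1} h - a" "\<forall>t\<in>{0..<1}. s t \<le> h t \<and> h t \<le> S t"
      using approx[of "integral {0..<1} h - a"] by auto
    have "integral {0..<1} h \<le> J"
      using has_integral_le[OF h_int *(1)] *(4) by force
    then have ev: "\<forall>\<^sub>F N in sequentially. a < orbit_sum \<alpha> s y N / real N"
      using *(2,3) unfolding has_orbit_mean_def by (intro order_tendstoD(1)) auto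
    have le: "orbit_sum \<alpha> s y N / real N \<le> orbit_sum \<alpha> h y N / real N" for N
      using *(4) by (intro divide_right_mono orbit_sum_mono) auto
    show "\<forall>\<^sub>F N in sequentially. a < orbit_sum \<alpha> h y N / real N"
      using ev by (rule eventually_mono) (rule less_le_trans[OF _ le])
  next
    fix y a
    assume "integral {0..<1} h < a"
    then obtain s S I J where *: "(s has_integral I) {0..<1}" "has_orbit_mean \<alpha> S J"
      "J - I < a - integral {0..<1} h" "\<forall>t\<in>{0..<1}. s t \<le> h t \<and> h t \<le> S t"
      using approx[of "a - integral {0..<1} h"] by auto
    have "I \<le> integral {0..<1} h"
      using has_integral_le[OF *(1) h_int] *(4) by force
    then have ev: "\<forall>\<^sub>F N in sequentially. orbit_sum \<alpha> S y N / real N < a"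
      using *(2,3) unfolding has_orbit_mean_def by (intro order_tendstoD(2)) auto
    have le: "orbit_sum \<alpha> h y N / real N \<le> orbit_sum \<alpha> S y N / real N" for N
      using *(4) by (intro divide_right_mono orbit_sum_mono) auto
    show "\<forall>\<^sub>F N in sequentially. orbit_sum \<alpha> h y N / real N < a"
      using ev by (rule eventually_mono) (rule le_less_trans[OF le])
  qed
qed

locale partition_01 =
  fixes p :: "nat \<Rightarrow> real" and n :: nat
  assumes first: "p 0 = 0" and last: "p n = 1" and increasing: "\<forall>i<n. p i < p (Suc i)"
begin

lemma cell_subset:
  assumes "j < n"
  shows "0 \<le> p j" "p (Suc j) \<le> 1" "{p j..<p (Suc j)} \<subseteq> {0..<1}"
proof -
  have mono: "p i \<le> p k" if "i \<le> k" "k \<le> n" for i k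
    by (rule lift_Suc_mono_le_ivl[of "{..<n}"]) (use increasing that in auto)
  show "0 \<le> p j" "p (Suc j) \<le> 1"
    using mono[of 0 j] mono[of "Suc j" n] assms first last by auto
  then show "{p j..<p (Suc j)} \<subseteq> {0..<1}"
    by auto
qed

lemma sum_cells_const:
  assumes "t \<in> {0..<1}"
  shows "(\<Sum>j<n. c * indicator {p j..<p (Suc j)} t) = (c :: real)"
  using indicator_Ico_telescope[of n p t] increasing first last assms
  by (simp add: sum_distrib_left[symmetric] less_imp_le)

lemma sum_cells_mono:
  fixes c d :: "nat \<Rightarrow> real"
  assumes "\<And>j. j < n \<Longrightarrow> t \<in> {p j..<p (Suc j)} \<Longrightarrow> c j \<le> d j"
  shows "(\<Sum>j<n. c j * indicator {p j..<p (Suc j)} t) \<le> (\<Sum>j<n. d j * indicator {p j..<p (Suc j)} t)"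
  using assms by (intro sum_mono) (simp add: indicator_def)

lemma step_fun_cells: "step_fun (\<lambda>t. \<Sum>j<n. c j * indicator {p j..<p (Suc j)} t)"
  using cell_subset by (intro step_fun_sum step_fun_cmult step_fun_indicator) auto

lemma has_integral_cells:
  "((\<lambda>t. \<Sum>j<n. c j * indicator {p j..<p (Suc j)} t) has_integral (\<Sum>j<n. c j * (p (Suc j) - p j))) {0..<1}"
  using cell_subset increasing
  by (intro has_integral_sum has_integral_mult_right has_integral_indicator_Ico) (auto simp: less_imp_le)

end

lemma riemann_integrable_01_step_bounds:
  assumes ri: "riemann_integrable_01 f" and f: "\<forall>x\<in>{0..<1}. 0 \<le> f x \<and> f x \<le> B" and "0 < \<epsilon>"
  obtains l u where "step_fun l" "step_fun u"
    "\<And>t. t \<in> {0..<1} \<Longrightarrow> 0 \<le> l t \<and> l t \<le> f t \<and> f t \<le> u t \<and> u t \<le> B"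
    "integral {0..<1} (\<lambda>t. u t - l t) < \<epsilon>"
proof -
  obtain n p where partition: "partition_01 p n"
    and small: "(\<Sum>i<n. (p (Suc i) - p i) *
        ((SUP x\<in>{p i..<p (Suc i)}. f x) - (INF x\<in>{p i..<p (Suc i)}. f x))) < \<epsilon>"
    using ri \<open>0 < \<epsilon>\<close> unfolding riemann_integrable_01_def partition_01_def by blast
  interpret partition_01 p n
    by (fact partition)
  define m where "m j = (INF x\<in>{p j..<p (Suc j)}. f x)" for j
  define M where "M j = (SUP x\<in>{p j..<p (Suc j)}. f x)" for j
  define l where "l t = (\<Sum>j<n. m j * indicator {p j..<p (Suc j)} t)" for t
  define u where "u t = (\<Sum>j<n. M j * indicator {p j..<p (Suc j)} t)" for t
  have mM: "0 \<le> m j \<and> m j \<le> f t \<and> f t \<le> M j \<and> M j \<le> B" if "j < n" "t \<in> {p j..<p (Suc j)}" for j t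
  proof -
    have "bdd_below (f ` {p j..<p (Suc j)})" "bdd_above (f ` {p j..<p (Suc j)})"
      using f cell_subset(3)[OF that(1)] by (auto intro!: bdd_belowI2 bdd_aboveI2)
    then show ?thesis
      unfolding m_def M_def using f cell_subset(3)[OF that(1)] that
      by (auto intro!: cINF_greatest cINF_lower cSUP_upper cSUP_least)
  qed
  have "0 \<le> l t \<and> l t \<le> f t \<and> f t \<le> u t \<and> u t \<le> B" if t: "t \<in> {0..<1}" for t
  proof -
    have "(\<Sum>j<n. 0 * indicator {p j..<p (Suc j)} t) \<le> l t"
      "l t \<le> (\<Sum>j<n. f t * indicator {p j..<p (Suc j)} t)"
      "(\<Sum>j<n. f t * indicator {p j..<p (Suc j)} t) \<le> u t"
      "u t \<le> (\<Sum>j<n. B * indicator {p j..<p (Suc j)} t)"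
      unfolding l_def u_def using mM by (intro sum_cells_mono; fastforce)+
    then show ?thesis
      using sum_cells_const[OF t] by simp
  qed
  moreover have "((\<lambda>t. u t - l t) has_integral (\<Sum>j<n. (M j - m j) * (p (Suc j) - p j))) {0..<1}"
    using has_integral_cells[of "\<lambda>j. M j - m j"]
    unfolding u_def l_def by (simp add: sum_subtractf left_diff_distrib)
  then have "integral {0..<1} (\<lambda>t. u t - l t) < \<epsilon>"
    using small unfolding m_def M_def by (simp add: integral_unique mult.commute)
  ultimately show thesis
    using that[of l u] step_fun_cells unfolding l_def u_def by blast
qed

lemma mult_diff_mult_le:
  fixes a b c d B :: real
  assumes "0 \<le> c" "c \<le> a" "a \<le> B" "0 \<le> d" "d \<le> b" "b \<le> B"
  shows "a * b - c * d \<le> B * (a - c) + B * (b - d)"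
proof -
  have "a * b - c * d = a * (b - d) + d * (a - c)"
    by (simp add: algebra_simps)
  moreover have "a * (b - d) \<le> B * (b - d)" "d * (a - c) \<le> B * (a - c)"
    using assms by (intro mult_right_mono; linarith)+
  ultimately show ?thesis
    by linarith
qed

lemma riemann_integrable_01_bound:
  assumes "riemann_integrable_01 f"
  obtains B where "\<And>x. x \<in> {0..<1} \<Longrightarrow> \<bar>f x\<bar> \<le> B"
proof -
  have "bounded (f ` {0..<1})"
    using assms unfolding riemann_integrable_01_def by blast
  then obtain B where "\<forall>x\<in>{0..<1}. \<bar>f x\<bar> \<le> B"
    unfolding bounded_real by auto
  then show thesis
    using that by blast
qed

lemma has_orbit_mean_rotate_mult_gap:
  assumes lu: "\<And>t. t \<in> {0..<1} \<Longrightarrow> 0 \<le> l t \<and> l t \<le> u t \<and> u t \<le> B"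
    and I: "has_orbit_mean \<alpha> (\<lambda>t. l (frac (t + \<beta>)) * l t) I"
    and J: "has_orbit_mean \<alpha> (\<lambda>t. u (frac (t + \<beta>)) * u t) J"
    and W: "has_orbit_mean \<alpha> (\<lambda>t. u t - l t) W"
  shows "J - I \<le> 2 * B * W"
proof -
  have "J - I \<le> B * W + B * W"
  proof (rule has_orbit_mean_mono[OF has_orbit_mean_diff[OF J I]])
    show "has_orbit_mean \<alpha> (\<lambda>t. B * (u (frac (t + \<beta>)) - l (frac (t + \<beta>))) + B * (u t - l t)) (B * W + B * W)"
      using W by (intro has_orbit_mean_add has_orbit_mean_cmult has_orbit_mean_rotate[of _ "\<lambda>t. u t - l t"])
    have "frac (t + \<beta>) \<in> {0..<1}" for t
      by (simp add: frac_lt_1)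
    then show "u (frac (t + \<beta>)) * u t - l (frac (t + \<beta>)) * l t
        \<le> B * (u (frac (t + \<beta>)) - l (frac (t + \<beta>))) + B * (u t - l t)" if "t \<in> {0..<1}" for t
      using lu[OF that] lu[of "frac (t + \<beta>)"] by (intro mult_diff_mult_le; force)
  qed
  then show ?thesis
    by simp
qed

lemma has_orbit_mean_rotate_mult:
  assumes irr: "\<alpha> \<notin> \<rat>" and nonneg: "\<forall>x\<in>{0..<1}. 0 \<le> f x" and ri: "riemann_integrable_01 f"
  shows "has_orbit_mean \<alpha> (\<lambda>t. f (frac (t + \<beta>)) * f t) (integral {0..<1} (\<lambda>t. f (frac (t + \<beta>)) * f t))"
proof (rule has_orbit_mean_sandwich)
  obtain B where "\<And>x. x \<in> {0..<1} \<Longrightarrow> \<bar>f x\<bar> \<le> B"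
    using riemann_integrable_01_bound[OF ri] by blast
  with nonneg have B: "\<forall>x\<in>{0..<1}. 0 \<le> f x \<and> f x \<le> B"
    by auto
  then have "0 \<le> f 0" "f 0 \<le> B"
    by auto
  then have "0 \<le> B"
    by linarith
  fix \<epsilon> :: real
  assume "0 < \<epsilon>"
  with \<open>0 \<le> B\<close> have "0 < \<epsilon> / (2 * B + 1)"
    by simp
  then obtain l u where step: "step_fun l" "step_fun u"
    and lu: "\<And>t. t \<in> {0..<1} \<Longrightarrow> 0 \<le> l t \<and> l t \<le> f t \<and> f t \<le> u t \<and> u t \<le> B"
    and W_small: "integral {0..<1} (\<lambda>t. u t - l t) < \<epsilon> / (2 * B + 1)"
    using riemann_integrable_01_step_bounds[OF ri B] by blast
  define s where "s t = l (frac (t + \<beta>)) * l t" for t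
  define S where "S t = u (frac (t + \<beta>)) * u t" for t
  have "step_fun s" "step_fun S"
    unfolding s_def S_def using step_fun_mult[OF step_fun_rotate] step by blast+
  then obtain I J where I: "(s has_integral I) {0..<1}" "has_orbit_mean \<alpha> s I"
    and J: "(S has_integral J) {0..<1}" "has_orbit_mean \<alpha> S J"
    using step_fun_integral_orbit_mean[OF irr] by blast
  obtain W where W: "((\<lambda>t. u t - l t) has_integral W) {0..<1}" "has_orbit_mean \<alpha> (\<lambda>t. u t - l t) W"
    using step_fun_integral_orbit_mean[OF irr step_fun_diff[OF step(2,1)]] by blast
  have "J - I \<le> 2 * B * W"
    using lu by (intro has_orbit_mean_rotate_mult_gap[where l = l and u = u,
        OF _ I(2)[unfolded s_def] J(2)[unfolded S_def] W(2)]) force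
  also have "\<dots> \<le> 2 * B * (\<epsilon> / (2 * B + 1))"
    using W_small integral_unique[OF W(1)] \<open>0 \<le> B\<close> by (intro mult_left_mono) auto
  also have "\<dots> < \<epsilon>"
    using \<open>0 \<le> B\<close> \<open>0 < \<epsilon>\<close> by (simp add: field_simps)
  finally have "J - I < \<epsilon>" .
  moreover have "s t \<le> f (frac (t + \<beta>)) * f t \<and> f (frac (t + \<beta>)) * f t \<le> S t" if "t \<in> {0..<1}" for t
    using lu[OF that] lu[of "frac (t + \<beta>)"] unfolding s_def S_def by (auto simp: frac_lt_1 intro: mult_mono)
  ultimately show "\<exists>s S I J. (s has_integral I) {0..<1} \<and> (S has_integral J) {0..<1}
      \<and> has_orbit_mean \<alpha> s I \<and> has_orbit_mean \<alpha> S J \<and> J - I < \<epsilon>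
      \<and> (\<forall>t\<in>{0..<1}. s t \<le> f (frac (t + \<beta>)) * f t \<and> f (frac (t + \<beta>)) * f t \<le> S t)"
    using I J by blast
qed

section \<open>The autocorrelation\<close>

lemma zconv_restr_reflect_real:
  fixes \<phi> :: "int \<Rightarrow> real"
  defines "\<mu> \<equiv> \<lambda>x. complex_of_real (\<phi> x)"
  shows "zconv (restr n \<mu>) (reflect (restr n \<mu>)) z
    = complex_of_real (\<Sum>x\<in>{-int n..int n}. if \<bar>x - z\<bar> \<le> int n then \<phi> x * \<phi> (x - z) else 0)"
proof -
  have "{x. restr n \<mu> x \<noteq> 0} \<subseteq> {-int n..int n}"
    by (auto simp: restr_def)
  then have "zconv (restr n \<mu>) (reflect (restr n \<mu>)) z
      = (\<Sum>x\<in>{-int n..int n}. restr n \<mu> x * reflect (restr n \<mu>) (z - x))"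
    unfolding zconv_def by (intro sum.mono_neutral_left) auto
  also have "\<dots> = (\<Sum>x\<in>{-int n..int n}.
      complex_of_real (if \<bar>x - z\<bar> \<le> int n then \<phi> x * \<phi> (x - z) else 0))"
    by (intro sum.cong) (auto simp: restr_def reflect_def \<mu>_def abs_minus_commute)
  finally show ?thesis
    by simp
qed

lemma sum_symmetric_interval:
  fixes G :: "int \<Rightarrow> 'a::ab_group_add"
  shows "(\<Sum>x\<in>{-int n..int n}. G x) = (\<Sum>k<Suc n. G (int k)) + (\<Sum>k<Suc n. G (- int k)) - G 0"
proof (induction n)
  case 0
  then show ?case
    by simp
next
  case (Suc n)
  have "{-int (Suc n)..int (Suc n)} = insert (- int (Suc n)) (insert (int (Suc n)) {-int n..int n})"
    by auto
  then have "(\<Sum>x\<in>{-int (Suc n)..int (Suc n)}. G x)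
      = G (- int (Suc n)) + G (int (Suc n)) + (\<Sum>x\<in>{-int n..int n}. G x)"
    by (simp add: algebra_simps)
  then show ?case
    using Suc.IH by (simp add: algebra_simps)
qed

lemma symmetric_average_tendsto:
  fixes G :: "int \<Rightarrow> real"
  assumes fwd: "(\<lambda>N. (\<Sum>k<N. G (int k)) / real N) \<longlonglongrightarrow> L"
    and bwd: "(\<lambda>N. (\<Sum>k<N. G (- int k)) / real N) \<longlonglongrightarrow> L"
  shows "(\<lambda>n. (\<Sum>x\<in>{-int n..int n}. G x) / real (2 * n + 1)) \<longlonglongrightarrow> L"
proof -
  define r where "r n = real (Suc n) / real (2 * n + 1)" for n
  have cancel: "x / real (Suc n) * r n = x / real (2 * n + 1)" for x n
    unfolding r_def times_divide_times_eq by simp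
  have "(\<Sum>x\<in>{-int n..int n}. G x) / real (2 * n + 1)
      = (\<Sum>k<Suc n. G (int k)) / real (Suc n) * r n + (\<Sum>k<Suc n. G (- int k)) / real (Suc n) * r n
        - G 0 / real (2 * n + 1)" for n
    unfolding sum_symmetric_interval cancel by (simp add: add_divide_distrib diff_divide_distrib)
  moreover have "r \<longlonglongrightarrow> 1 / 2"
    unfolding r_def by real_asymp
  moreover have "(\<lambda>n. G 0 / real (2 * n + 1)) \<longlonglongrightarrow> 0"
    by real_asymp
  ultimately have "(\<lambda>n. (\<Sum>x\<in>{-int n..int n}. G x) / real (2 * n + 1)) \<longlonglongrightarrow> L * (1 / 2) + L * (1 / 2) - 0"
    using LIMSEQ_Suc[OF fwd] LIMSEQ_Suc[OF bwd] by (simp only:) (intro tendsto_intros)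
  then show ?thesis
    by simp
qed

lemma card_outside_shifted_interval:
  "card {x \<in> {-int n..int n}. \<not> \<bar>x - z\<bar> \<le> int n} \<le> 2 * nat \<bar>z\<bar>"
proof -
  have "card {x \<in> {-int n..int n}. \<not> \<bar>x - z\<bar> \<le> int n}
      \<le> card ({int n - \<bar>z\<bar><..int n} \<union> {-int n..<\<bar>z\<bar> - int n})"
    by (intro card_mono) auto
  also have "\<dots> \<le> card {int n - \<bar>z\<bar><..int n} + card {-int n..<\<bar>z\<bar> - int n}"
    by (rule card_Un_le)
  also have "\<dots> = 2 * nat \<bar>z\<bar>"
    by simp
  finally show ?thesis .
qed

lemma truncated_average_tendsto:
  fixes G :: "int \<Rightarrow> real"
  assumes avg: "(\<lambda>n. (\<Sum>x\<in>{-int n..int n}. G x) / real (2 * n + 1)) \<longlonglongrightarrow> L"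
    and bound: "\<And>x. \<bar>G x\<bar> \<le> C"
  shows "(\<lambda>n. (\<Sum>x\<in>{-int n..int n}. if \<bar>x - z\<bar> \<le> int n then G x else 0) / real (2 * n + 1)) \<longlonglongrightarrow> L"
proof -
  define E where "E n = {x \<in> {-int n..int n}. \<not> \<bar>x - z\<bar> \<le> int n}" for n
  have "real (card (E n)) \<le> 2 * \<bar>of_int z\<bar>" for n
    using of_nat_mono[OF card_outside_shifted_interval[of n z], where 'a = real] unfolding E_def by simp
  then have sum_E: "\<bar>\<Sum>x\<in>E n. G x\<bar> \<le> 2 * \<bar>of_int z\<bar> * C" for n
    using bound bound[of 0] order_trans[OF sum_abs sum_bounded_above[of "E n" "\<lambda>x. \<bar>G x\<bar>" C]]
    by (smt (verit) mult_right_mono)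
  have "(\<lambda>n. (\<Sum>x\<in>E n. G x) / real (2 * n + 1)) \<longlonglongrightarrow> 0"
  proof (rule Lim_null_comparison)
    show "\<forall>\<^sub>F n in sequentially. norm ((\<Sum>x\<in>E n. G x) / real (2 * n + 1))
        \<le> 2 * \<bar>of_int z\<bar> * C / real (2 * n + 1)"
      using sum_E by (intro always_eventually allI) (simp add: divide_right_mono)
    show "(\<lambda>n. 2 * \<bar>of_int z\<bar> * C / real (2 * n + 1)) \<longlonglongrightarrow> 0"
      by real_asymp
  qed
  with avg have "(\<lambda>n. (\<Sum>x\<in>{-int n..int n}. G x) / real (2 * n + 1) - (\<Sum>x\<in>E n. G x) / real (2 * n + 1))
      \<longlonglongrightarrow> L - 0"
    by (intro tendsto_diff)
  moreover have "(\<Sum>x\<in>{-int n..int n}. G x) - (\<Sum>x\<in>E n. G x)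
      = (\<Sum>x\<in>{-int n..int n}. if \<bar>x - z\<bar> \<le> int n then G x else 0)" for n
  proof -
    have "(\<Sum>x\<in>E n. G x) = (\<Sum>x\<in>{-int n..int n}. if \<not> \<bar>x - z\<bar> \<le> int n then G x else 0)"
      unfolding E_def by (rule sum.inter_filter) simp
    also have "\<dots> = (\<Sum>x\<in>{-int n..int n}. G x - (if \<bar>x - z\<bar> \<le> int n then G x else 0))"
      by (rule sum.cong) auto
    finally show ?thesis
      by (simp add: sum_subtractf)
  qed
  ultimately show ?thesis
    by (simp add: diff_divide_distrib[symmetric])
qed

lemma two_sided_orbit_average:
  assumes irr: "\<alpha> \<notin> \<rat>" and nonneg: "\<forall>x\<in>{0..<1}. 0 \<le> f x" and ri: "riemann_integrable_01 f"
  shows "(\<lambda>n. (\<Sum>x\<in>{-int n..int n}.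
      if \<bar>x - z\<bar> \<le> int n then f (T_pow \<alpha> x y) * f (T_pow \<alpha> (x - z) y) else 0) / real (2 * n + 1))
    \<longlonglongrightarrow> integral {0..<1} (\<lambda>x. f (T_pow \<alpha> (- z) x) * f x)"
proof -
  define g where "g x = f (T_pow \<alpha> (- z) x) * f x" for x
  define G where "G x = f (T_pow \<alpha> x y) * f (T_pow \<alpha> (x - z) y)" for x
  have G_orbit: "G x = g (frac (y + of_int x * \<alpha>))" for x
    unfolding G_def g_def T_pow_def frac_add_simps(1) by (simp add: algebra_simps)
  have "- \<alpha> \<notin> \<rat>"
    using irr by simp
  then have "has_orbit_mean \<alpha> g (integral {0..<1} g)" "has_orbit_mean (- \<alpha>) g (integral {0..<1} g)"
    unfolding g_def T_pow_def using has_orbit_mean_rotate_mult irr nonneg ri by blast+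
  then have fwd: "(\<lambda>N. (\<Sum>k<N. G (int k)) / real N) \<longlonglongrightarrow> integral {0..<1} g"
    and bwd: "(\<lambda>N. (\<Sum>k<N. G (- int k)) / real N) \<longlonglongrightarrow> integral {0..<1} g"
    unfolding has_orbit_mean_def orbit_sum_def G_orbit by simp_all
  obtain B where "\<And>x. x \<in> {0..<1} \<Longrightarrow> \<bar>f x\<bar> \<le> B"
    using riemann_integrable_01_bound[OF ri] by blast
  then have B: "\<bar>f (frac t)\<bar> \<le> B" for t
    by (simp add: frac_lt_1)
  then have "0 \<le> B"
    using abs_ge_zero[of "f (frac 0)"] order_trans by blast
  then have "\<bar>G x\<bar> \<le> B * B" for x
    unfolding G_def T_pow_def abs_mult by (intro mult_mono B) auto
  then show ?thesis
    using truncated_average_tendsto[OF symmetric_average_tendsto[OF fwd bwd]]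
    unfolding G_def g_def by blast
qed

theorem mainTheorem5:
  fixes \<alpha> :: real and f :: "real \<Rightarrow> real" and y :: real
  assumes "\<alpha> > 0" and "\<alpha> \<notin> \<rat>"
    and "\<forall>x\<in>{0..<1}. f x \<ge> 0"
    and "riemann_integrable_01 f"
    and "y \<in> {0..<1}"
  shows "is_autocorrelation (\<lambda>z. complex_of_real (f (T_pow \<alpha> z y)))
           (\<lambda>z. complex_of_real (integral {0..<1} (\<lambda>x. f (T_pow \<alpha> (- z) x) * f x)))"
  unfolding is_autocorrelation_def zconv_restr_reflect_real
proof
  fix z :: int
  have "(\<lambda>n. complex_of_real ((\<Sum>x\<in>{-int n..int n}.
      if \<bar>x - z\<bar> \<le> int n then f (T_pow \<alpha> x y) * f (T_pow \<alpha> (x - z) y) else 0) / real (2 * n + 1)))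
    \<longlonglongrightarrow> complex_of_real (integral {0..<1} (\<lambda>x. f (T_pow \<alpha> (- z) x) * f x))"
    by (intro tendsto_of_real two_sided_orbit_average assms(2-4))
  then show "(\<lambda>n. complex_of_real (\<Sum>x\<in>{-int n..int n}.
      if \<bar>x - z\<bar> \<le> int n then f (T_pow \<alpha> x y) * f (T_pow \<alpha> (x - z) y) else 0) / of_nat (2 * n + 1))
    \<longlonglongrightarrow> complex_of_real (integral {0..<1} (\<lambda>x. f (T_pow \<alpha> (- z) x) * f x))"
    by simp
qed

end
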